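(* The map $\Lambda:\Xi\to\Psi:=\Lambda(\Xi)$ is a bijection, and in terms of $\psi=\Lambda(\Gamma(\theta))$ the log-likelihood of the observed data is $$L(\psi)=\sum_{k=1}^K n_k\log\xi_{S_k}(\psi)+\sum_{i\in E}n_i(1)\,\psi_i ,$$ where $\xi(\psi)=\Lambda^{-1}(\psi)$. Equivalently, in terms of $\xi\in\Xi$, $$L(\xi)=\sum_{i\in E}\Big[n_i(1)\log\frac{1-\xi_i}{1-\prod_{j\in C_i}\xi_j}+n_i(0)\log\xi_i\Big],$$ with the convention that the empty product over $C_i=\emptyset$ equals $0$. Moreover, for non-leaf $i$, $\psi_i=\log P(X_i=1\mid \text{probe at tail of } i,\ X_r=0\ \forall r\in R_i)$.
   Context: Network: a finite set of directed links $E=\{1,\dots,m\}$ between nodes, forming a directed acyclic graph. For a link $i$, $C_i$ is the set of links whose tail is the head of $i$ (child links); $B_i$ is the set of links having the same tail as $i$ (brother links, including $i$ itself); $F_i$ is the set of links whose head is the tail of $i$ (parent links). A link $i$ is a leaf link if $C_i=\emptyset$; $R$ is the set of leaf links, and $R_i$ is the set of leaf links that are descendants of $i$ (including $i$ itself if $i$ is a leaf). The network is covered by $K\ge1$ multicast trees $T_1,\dots,T_K$: $T_k$ has a root link $S_k$ whose tail is a source node with no incoming link ($F_{S_k}=\emptyset$); its link set $E_k$ consists of $S_k$ and all descendants of $S_k$; every link $i\in E_k\setminus\{S_k\}$ has exactly one parent link in $E_k$, denoted $f^{(k)}_i\in F_i\cap E_k$; every link belongs to some $E_k$; each root link $S_k$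 belongs only to $E_k$. Write $\mathscr S=\{S_1,\dots,S_K\}$. Loss model: each link $i$ has loss rate $\theta_i$, $\theta\in\Theta=(0,1)^m$. From the source of tree $T_k$, $n_k$ probes are sent. For probe $t$ in tree $k$ and $i\in E_k$, $X^{(k,t)}_i=1$ if the probe reached the head of link $i$ and $0$ otherwise. A probe at the tail of link $i$ (i.e., $i=S_k$, or $X^{(k,t)}_{f^{(k)}_i}=1$) traverses link $i$ with probability $1-\theta_i$, independently across links, probes and trees; a probe not at the tail of $i$ does not reach its head. Only $X^{(k,t)}_r$ for leaf links $r\in R\cap E_k$ are observed; the log-likelihood is the log-probability of the observed data. Internal views: $Y^{(k,t)}_i=\max_{r\in R_i}X^{(k,t)}_r$ for $i\in E_k$; $n_{k,i}(1)=\sum_{t=1}^{n_k}Y^{(k,t)}_i$ for $i\in E_k$ and $0$ for $i\notin E_k$; $n_{k,S_k}(0)=n_k-n_{k,S_k}(1)$, $n_{k,i}(0)=n_{k,f^{(k)}_i}(1)-n_{k,i}(1)$ for $i\in E_k\setminus\{S_k\}$, and $0$ for $i\notin E_k$; $n_i(1)=\sum_k n_{k,i}(1)$, $n_i(0)=\sum_k n_{k,i}(0)$. Parameter systems: $\xi_i(\theta)=\theta_i$ for leaf $i$ and $\xi_i(\theta)=\theta_i+(1-\theta_i)\prod_{j\in C_i}\xi_j(\theta)$ otherwise (recursively from the leaves); $\Gamma(\theta)=(\xi_i(\theta))_i$, $\Xi=\Gamma(\Theta)$, with inverse $\theta_i(\xi)=\xi_i$ for leaf $i$ and $\theta_i(\xi)=(\xi_i-\prod_{j\in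 C_i}\xi_j)/(1-\prod_{j\in C_i}\xi_j)$ otherwise. For $\xi\in\Xi$ define $\Lambda(\xi)=\psi$ by $\psi_i=\log\frac{1-\theta_i(\xi)}{\xi_i}$ for leaf $i$ and $\psi_i=\log\frac{\xi_i-\theta_i(\xi)}{\xi_i}$ for non-leaf $i$. *)

theory Defs
  imports "HOL-Analysis.Analysis"
begin

text \<open>Network: finite link set E, each link i has a tail node tal i and a head node hed i.\<close>

definition children :: "('l \<Rightarrow> 'v) \<Rightarrow> ('l \<Rightarrow> 'v) \<Rightarrow> 'l set \<Rightarrow> 'l \<Rightarrow> 'l set" where
  "children hed tal E i = {j \<in> E. tal j = hed i}"

definition parents :: "('l \<Rightarrow> 'v) \<Rightarrow> ('l \<Rightarrow> 'v) \<Rightarrow> 'l set \<Rightarrow> 'l \<Rightarrow> 'l set" where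
  "parents hed tal E i = {j \<in> E. hed j = tal i}"

definition is_leaf :: "('l \<Rightarrow> 'v) \<Rightarrow> ('l \<Rightarrow> 'v) \<Rightarrow> 'l set \<Rightarrow> 'l \<Rightarrow> bool" where
  "is_leaf hed tal E i \<longleftrightarrow> children hed tal E i = {}"

definition leaves :: "('l \<Rightarrow> 'v) \<Rightarrow> ('l \<Rightarrow> 'v) \<Rightarrow> 'l set \<Rightarrow> 'l set" where
  "leaves hed tal E = {i \<in> E. is_leaf hed tal E i}"

definition child_rel :: "('l \<Rightarrow> 'v) \<Rightarrow> ('l \<Rightarrow> 'v) \<Rightarrow> 'l set \<Rightarrow> ('l \<times> 'l) set" where
  "child_rel hed tal E = {(i, j). i \<in> E \<and> j \<in> E \<and> tal j = hed i}"

definition descendants :: "('l \<Rightarrow> 'v) \<Rightarrow> ('l \<Rightarrow> 'v) \<Rightarrow> 'l set \<Rightarrow> 'l \<Rightarrow> 'l set" where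
  "descendants hed tal E i = {j. (i, j) \<in> (child_rel hed tal E)\<^sup>*}"

text \<open>R_i: leaf links that are descendants of i (including i if it is a leaf).\<close>
definition leaf_desc :: "('l \<Rightarrow> 'v) \<Rightarrow> ('l \<Rightarrow> 'v) \<Rightarrow> 'l set \<Rightarrow> 'l \<Rightarrow> 'l set" where
  "leaf_desc hed tal E i = descendants hed tal E i \<inter> leaves hed tal E"

definition tree_parent :: "('l \<Rightarrow> 'v) \<Rightarrow> ('l \<Rightarrow> 'v) \<Rightarrow> 'l set \<Rightarrow> 'l set \<Rightarrow> 'l \<Rightarrow> 'l" where
  "tree_parent hed tal E A j = (THE p. p \<in> parents hed tal E j \<inter> A)"

text \<open>Standing assumptions: a DAG covered by K multicast trees with root links S 1, ..., S K;
  E_k = descendants of S k.\<close>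
definition multicast_network ::
  "('l \<Rightarrow> 'v) \<Rightarrow> ('l \<Rightarrow> 'v) \<Rightarrow> 'l set \<Rightarrow> nat \<Rightarrow> (nat \<Rightarrow> 'l) \<Rightarrow> bool" where
  "multicast_network hed tal E K S \<longleftrightarrow>
     finite E \<and>
     acyclic {(tal i, hed i) | i. i \<in> E} \<and>
     K \<ge> 1 \<and>
     (\<forall>k \<in> {1..K}. S k \<in> E \<and> parents hed tal E (S k) = {}) \<and>
     (\<forall>k \<in> {1..K}. \<forall>i \<in> descendants hed tal E (S k) - {S k}.
         \<exists>!p. p \<in> parents hed tal E i \<inter> descendants hed tal E (S k)) \<and>
     (\<forall>i \<in> E. \<exists>k \<in> {1..K}. i \<in> descendants hed tal E (S k)) \<and>
     (\<forall>k \<in> {1..K}. \<forall>l \<in> {1..K}. S k \<in> descendants hed tal E (S l) \<longrightarrow> l = k)"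

definition Theta_space :: "'l set \<Rightarrow> ('l \<Rightarrow> real) set" where
  "Theta_space E = E \<rightarrow>\<^sub>E {0<..<1}"

definition Gamma :: "('l \<Rightarrow> 'v) \<Rightarrow> ('l \<Rightarrow> 'v) \<Rightarrow> 'l set \<Rightarrow> ('l \<Rightarrow> real) \<Rightarrow> ('l \<Rightarrow> real)" where
  "Gamma hed tal E \<theta> = (THE g. g \<in> extensional E \<and>
      (\<forall>i \<in> E. g i = (if is_leaf hed tal E i then \<theta> i
                       else \<theta> i + (1 - \<theta> i) * (\<Prod>j \<in> children hed tal E i. g j))))"

definition Xi_space :: "('l \<Rightarrow> 'v) \<Rightarrow> ('l \<Rightarrow> 'v) \<Rightarrow> 'l set \<Rightarrow> ('l \<Rightarrow> real) set" where
  "Xi_space hed tal E = Gamma hed tal E ` Theta_space E"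

definition theta_of :: "('l \<Rightarrow> 'v) \<Rightarrow> ('l \<Rightarrow> 'v) \<Rightarrow> 'l set \<Rightarrow> ('l \<Rightarrow> real) \<Rightarrow> 'l \<Rightarrow> real" where
  "theta_of hed tal E \<xi> i = (if is_leaf hed tal E i then \<xi> i
     else (\<xi> i - (\<Prod>j \<in> children hed tal E i. \<xi> j)) / (1 - (\<Prod>j \<in> children hed tal E i. \<xi> j)))"

definition Lambda :: "('l \<Rightarrow> 'v) \<Rightarrow> ('l \<Rightarrow> 'v) \<Rightarrow> 'l set \<Rightarrow> ('l \<Rightarrow> real) \<Rightarrow> ('l \<Rightarrow> real)" where
  "Lambda hed tal E \<xi> = restrict (\<lambda>i. if is_leaf hed tal E i
        then ln ((1 - theta_of hed tal E \<xi> i) / \<xi> i)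
        else ln ((\<xi> i - theta_of hed tal E \<xi> i) / \<xi> i)) E"

text \<open>For a link set A forming a tree with root link a, and a set U \<subseteq> A of links
  whose head is reached by the probe (X_i = 1 iff i \<in> U), the probability of this configuration
  given that the probe is at the tail of a: each link whose tail is reached is traversed with
  probability 1 - theta_i independently; a link whose tail is not reached is not traversed.\<close>
definition config_prob ::
  "('l \<Rightarrow> 'v) \<Rightarrow> ('l \<Rightarrow> 'v) \<Rightarrow> 'l set \<Rightarrow> ('l \<Rightarrow> real) \<Rightarrow> 'l set \<Rightarrow> 'l \<Rightarrow> 'l set \<Rightarrow> real" where
  "config_prob hed tal E \<theta> A a U =
     (\<Prod>i \<in> A. if i = a \<or> tree_parent hed tal E A i \<in> U
                then (if i \<in> U then 1 - \<theta> i else \<theta> i)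
                else (if i \<in> U then 0 else 1))"

definition tree_prob ::
  "('l \<Rightarrow> 'v) \<Rightarrow> ('l \<Rightarrow> 'v) \<Rightarrow> 'l set \<Rightarrow> ('l \<Rightarrow> real) \<Rightarrow> 'l set \<Rightarrow> 'l \<Rightarrow> ('l set \<Rightarrow> bool) \<Rightarrow> real" where
  "tree_prob hed tal E \<theta> A a P = (\<Sum>U \<in> {U. U \<subseteq> A \<and> P U}. config_prob hed tal E \<theta> A a U)"

text \<open>Log-likelihood of the observed data: obs k t is the set of leaf links of tree k reached by
  probe t (only its intersection with the leaf links of E_k is used); n k probes in tree k.\<close>
definition loglik ::
  "('l \<Rightarrow> 'v) \<Rightarrow> ('l \<Rightarrow> 'v) \<Rightarrow> 'l set \<Rightarrow> nat \<Rightarrow> (nat \<Rightarrow> 'l) \<Rightarrow> (nat \<Rightarrow> nat)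
     \<Rightarrow> (nat \<Rightarrow> nat \<Rightarrow> 'l set) \<Rightarrow> ('l \<Rightarrow> real) \<Rightarrow> real" where
  "loglik hed tal E K S n obs \<theta> =
     (\<Sum>k \<in> {1..K}. \<Sum>t \<in> {1..n k}.
        ln (tree_prob hed tal E \<theta> (descendants hed tal E (S k)) (S k)
              (\<lambda>U. U \<inter> leaves hed tal E = obs k t \<inter> leaves hed tal E \<inter> descendants hed tal E (S k))))"

definition cnt1 ::
  "('l \<Rightarrow> 'v) \<Rightarrow> ('l \<Rightarrow> 'v) \<Rightarrow> 'l set \<Rightarrow> nat \<Rightarrow> (nat \<Rightarrow> 'l) \<Rightarrow> (nat \<Rightarrow> nat)
     \<Rightarrow> (nat \<Rightarrow> nat \<Rightarrow> 'l set) \<Rightarrow> nat \<Rightarrow> 'l \<Rightarrow> real" where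
  "cnt1 hed tal E K S n obs k i =
     (if k \<in> {1..K} \<and> i \<in> descendants hed tal E (S k)
      then real (card {t \<in> {1..n k}. leaf_desc hed tal E i \<inter> obs k t \<noteq> {}})
      else 0)"

definition cnt0 ::
  "('l \<Rightarrow> 'v) \<Rightarrow> ('l \<Rightarrow> 'v) \<Rightarrow> 'l set \<Rightarrow> nat \<Rightarrow> (nat \<Rightarrow> 'l) \<Rightarrow> (nat \<Rightarrow> nat)
     \<Rightarrow> (nat \<Rightarrow> nat \<Rightarrow> 'l set) \<Rightarrow> nat \<Rightarrow> 'l \<Rightarrow> real" where
  "cnt0 hed tal E K S n obs k i =
     (if k \<in> {1..K} \<and> i = S k then real (n k) - cnt1 hed tal E K S n obs k i
      else if k \<in> {1..K} \<and> i \<in> descendants hed tal E (S k)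
      then cnt1 hed tal E K S n obs k (tree_parent hed tal E (descendants hed tal E (S k)) i)
           - cnt1 hed tal E K S n obs k i
      else 0)"

definition N1 ::
  "('l \<Rightarrow> 'v) \<Rightarrow> ('l \<Rightarrow> 'v) \<Rightarrow> 'l set \<Rightarrow> nat \<Rightarrow> (nat \<Rightarrow> 'l) \<Rightarrow> (nat \<Rightarrow> nat)
     \<Rightarrow> (nat \<Rightarrow> nat \<Rightarrow> 'l set) \<Rightarrow> 'l \<Rightarrow> real" where
  "N1 hed tal E K S n obs i = (\<Sum>k \<in> {1..K}. cnt1 hed tal E K S n obs k i)"

definition N0 ::
  "('l \<Rightarrow> 'v) \<Rightarrow> ('l \<Rightarrow> 'v) \<Rightarrow> 'l set \<Rightarrow> nat \<Rightarrow> (nat \<Rightarrow> 'l) \<Rightarrow> (nat \<Rightarrow> nat)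
     \<Rightarrow> (nat \<Rightarrow> nat \<Rightarrow> 'l set) \<Rightarrow> 'l \<Rightarrow> real" where
  "N0 hed tal E K S n obs i = (\<Sum>k \<in> {1..K}. cnt0 hed tal E K S n obs k i)"

definition cond_prob_pass ::
  "('l \<Rightarrow> 'v) \<Rightarrow> ('l \<Rightarrow> 'v) \<Rightarrow> 'l set \<Rightarrow> ('l \<Rightarrow> real) \<Rightarrow> 'l \<Rightarrow> real" where
  "cond_prob_pass hed tal E \<theta> i =
     tree_prob hed tal E \<theta> (descendants hed tal E i) i
        (\<lambda>U. i \<in> U \<and> U \<inter> leaf_desc hed tal E i = {})
   / tree_prob hed tal E \<theta> (descendants hed tal E i) i
        (\<lambda>U. U \<inter> leaf_desc hed tal E i = {})"

end

theory Submission
  imports Defs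
begin

text \<open>Since the subtrees below distinct children of a link are disjoint and each link is passed
  independently, the probability of an observation factorises over subtrees. Given a probe at the
  tail of \<open>i\<close>, no leaf below \<open>i\<close> is reached with probability \<open>\<xi>\<^sub>i\<close>, while an observation that
  reaches some leaf below \<open>i\<close> has probability \<open>1 - \<theta>\<^sub>i\<close> times the product of the probabilities of
  its restrictions to the children. Hence the log-probability of one probe splits into \<open>ln (1 - \<theta>\<^sub>l)\<close>
  for every link \<open>l\<close> below which the probe is seen and \<open>ln \<xi>\<^sub>l\<close> for every link where it is lost;
  counting over probes gives the \<open>\<xi>\<close>-form of the likelihood, and charging each \<open>ln \<xi>\<^sub>j\<close> to the
  parent of \<open>j\<close> instead gives the \<open>\<psi>\<close>-form. \<open>\<Lambda>\<close> is injective because \<open>\<psi>\<^sub>i\<close> is a strictly monotone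
  function of \<open>\<xi>\<^sub>i\<close> once the values on the children are fixed.\<close>

section \<open>Finite sums and products\<close>

lemma sum_Pow_Un_mult:
  fixes f g :: "'a set \<Rightarrow> 'b::comm_semiring_1"
  assumes "finite B" "finite D" "B \<inter> D = {}"
  shows "(\<Sum>V\<in>Pow (B \<union> D). f (V \<inter> B) * g (V \<inter> D)) = (\<Sum>X\<in>Pow B. f X) * (\<Sum>Y\<in>Pow D. g Y)"
proof -
  have split: "(X \<union> Y) \<inter> B = X" "(X \<union> Y) \<inter> D = Y" if "X \<subseteq> B" "Y \<subseteq> D" for X Y
    using that assms(3) by blast+
  have "(\<Sum>X\<in>Pow B. f X) * (\<Sum>Y\<in>Pow D. g Y) = (\<Sum>(X, Y)\<in>Pow B \<times> Pow D. f X * g Y)"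
    by (simp add: sum_product sum.cartesian_product)
  also have "\<dots> = (\<Sum>V\<in>Pow (B \<union> D). f (V \<inter> B) * g (V \<inter> D))"
    by (rule sum.reindex_bij_witness[where i = "\<lambda>V. (V \<inter> B, V \<inter> D)" and j = "\<lambda>(X, Y). X \<union> Y"])
      (use assms split in auto)
  finally show ?thesis by simp
qed

lemma sum_Pow_UNION_prod:
  fixes g :: "'i \<Rightarrow> 'a set \<Rightarrow> 'b::comm_semiring_1"
  assumes "finite I" "\<And>j. j \<in> I \<Longrightarrow> finite (B j)"
    and "\<And>i j. i \<in> I \<Longrightarrow> j \<in> I \<Longrightarrow> i \<noteq> j \<Longrightarrow> B i \<inter> B j = {}"
  shows "(\<Sum>V\<in>Pow (\<Union>j\<in>I. B j). \<Prod>j\<in>I. g j (V \<inter> B j)) = (\<Prod>j\<in>I. \<Sum>W\<in>Pow (B j). g j W)"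
  using assms
proof (induction I rule: finite_induct)
  case (insert x I)
  let ?R = "\<Union>j\<in>I. B j"
  have "(\<Sum>V\<in>Pow (\<Union>j\<in>insert x I. B j). \<Prod>j\<in>insert x I. g j (V \<inter> B j))
      = (\<Sum>V\<in>Pow (B x \<union> ?R). g x (V \<inter> B x) * (\<lambda>W. \<Prod>j\<in>I. g j (W \<inter> B j)) (V \<inter> ?R))"
  proof (rule sum.cong)
    fix V
    have "(\<Prod>j\<in>I. g j (V \<inter> B j)) = (\<Prod>j\<in>I. g j (V \<inter> ?R \<inter> B j))"
      by (rule prod.cong) (auto intro!: arg_cong[where f = "g _"])
    then show "(\<Prod>j\<in>insert x I. g j (V \<inter> B j)) = g x (V \<inter> B x) * (\<lambda>W. \<Prod>j\<in>I. g j (W \<inter> B j)) (V \<inter> ?R)"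
      using insert by simp
  qed simp
  also have "\<dots> = (\<Sum>X\<in>Pow (B x). g x X) * (\<Sum>Y\<in>Pow ?R. \<Prod>j\<in>I. g j (Y \<inter> B j))"
    by (rule sum_Pow_Un_mult) (use insert in auto)
  also have "\<dots> = (\<Prod>j\<in>insert x I. \<Sum>W\<in>Pow (B j). g j W)"
    using insert by simp
  finally show ?case .
qed simp

lemma sum_Pow_insert:
  assumes "a \<notin> D" "finite D"
  shows "(\<Sum>V\<in>Pow (insert a D). F V) = (\<Sum>V\<in>Pow D. F V) + (\<Sum>V\<in>Pow D. F (insert a V))"
proof -
  have "inj_on (insert a) (Pow D)"
    using assms(1) by (auto simp: inj_on_def)
  then show ?thesis
    unfolding Pow_insert using assms by (subst sum.union_disjoint) (auto simp: sum.reindex)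
qed

lemma prod_less_1:
  fixes f :: "'a \<Rightarrow> real"
  assumes "finite J" "J \<noteq> {}" "\<And>j. j \<in> J \<Longrightarrow> 0 \<le> f j \<and> f j < 1"
  shows "prod f J < 1"
  using assms
proof (induction J rule: finite_ne_induct)
  case (insert x F)
  then have "f x * prod f F < 1 * 1"
    by (intro mult_strict_mono) (auto intro: prod_nonneg)
  then show ?case using insert by simp
qed simp

lemma prod_of_bool: "finite J \<Longrightarrow> (\<Prod>j\<in>J. (of_bool (P j) :: 'a::comm_semiring_1)) = of_bool (\<forall>j\<in>J. P j)"
  by (induction J rule: finite_induct) auto

lemma sum_sum_if_card:
  assumes "finite T" "finite L"
  shows "(\<Sum>t\<in>T. \<Sum>l\<in>L. if P t l then c l else 0)
    = (\<Sum>l\<in>L. of_nat (card {t\<in>T. P t l}) * (c l :: 'a::semiring_1))"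
  using assms by (subst sum.swap) (simp add: sum.inter_filter[symmetric])

lemma card_filter_diff:
  assumes "finite T" "\<And>t. t \<in> T \<Longrightarrow> Q t \<Longrightarrow> P t"
  shows "real (card {t\<in>T. P t}) - real (card {t\<in>T. Q t}) = real (card {t\<in>T. P t \<and> \<not> Q t})"
proof -
  have "{t\<in>T. P t \<and> \<not> Q t} = {t\<in>T. P t} - {t\<in>T. Q t}" "{t\<in>T. Q t} \<subseteq> {t\<in>T. P t}"
    using assms(2) by auto
  then show ?thesis
    using assms(1) by (simp add: card_Diff_subset card_mono)
qed

section \<open>The link structure of a multicast network\<close>

locale multicast_net =
  fixes hed tal :: "'l \<Rightarrow> 'v" and E :: "'l set" and K :: nat and S :: "nat \<Rightarrow> 'l"
  assumes net: "multicast_network hed tal E K S"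
begin

abbreviation "child \<equiv> child_rel hed tal E"
abbreviation "ch \<equiv> children hed tal E"
abbreviation "desc \<equiv> descendants hed tal E"
abbreviation "leaf \<equiv> is_leaf hed tal E"
abbreviation "lvs \<equiv> leaves hed tal E"
abbreviation "ldesc \<equiv> leaf_desc hed tal E"
abbreviation "tp \<equiv> tree_parent hed tal E"

lemma finite_E: "finite E"
  and root_in_E: "k \<in> {1..K} \<Longrightarrow> S k \<in> E"
  and root_no_parents: "k \<in> {1..K} \<Longrightarrow> parents hed tal E (S k) = {}"
  and unique_parent_in_tree:
    "k \<in> {1..K} \<Longrightarrow> i \<in> desc (S k) - {S k} \<Longrightarrow> \<exists>!p. p \<in> parents hed tal E i \<inter> desc (S k)"
  and link_in_some_tree: "i \<in> E \<Longrightarrow> \<exists>k\<in>{1..K}. i \<in> desc (S k)"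
  using net unfolding multicast_network_def by auto

lemma child_rel_iff: "(i, j) \<in> child \<longleftrightarrow> i \<in> E \<and> j \<in> E \<and> tal j = hed i"
  by (simp add: child_rel_def)

lemma children_iff: "j \<in> ch i \<longleftrightarrow> j \<in> E \<and> tal j = hed i"
  by (simp add: children_def)

lemma children_child_rel: "i \<in> E \<Longrightarrow> j \<in> ch i \<longleftrightarrow> (i, j) \<in> child"
  by (simp add: children_iff child_rel_iff)

lemma descendants_iff: "l \<in> desc i \<longleftrightarrow> (i, l) \<in> child\<^sup>*"
  by (simp add: descendants_def)

lemma is_leaf_iff: "leaf i \<longleftrightarrow> ch i = {}"
  by (simp add: is_leaf_def)

lemma child_rel_trancl_nodes: "(i, l) \<in> child\<^sup>+ \<Longrightarrow> (hed i, hed l) \<in> {(tal i, hed i) | i. i \<in> E}\<^sup>+"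
proof (induction rule: trancl_induct)
  case (base l)
  then have "(hed i, hed l) \<in> {(tal i, hed i) | i. i \<in> E}"
    by (auto simp: child_rel_iff intro!: exI[of _ l])
  then show ?case by (rule r_into_trancl)
next
  case (step l m)
  then have "(hed l, hed m) \<in> {(tal i, hed i) | i. i \<in> E}"
    by (auto simp: child_rel_iff intro!: exI[of _ m])
  with step show ?case by (meson trancl_into_trancl)
qed

lemma acyclic_child_rel: "acyclic child"
  using net child_rel_trancl_nodes unfolding multicast_network_def acyclic_def by blast

lemma wf_converse_child_rel: "wf (child\<inverse>)"
proof (rule finite_acyclic_wf_converse[OF _ acyclic_child_rel])
  have "child \<subseteq> E \<times> E" by (auto simp: child_rel_iff)
  then show "finite child" using finite_E finite_subset by blast
qed

lemma link_induct[consumes 1, case_names step]: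
  assumes "i \<in> E" and "\<And>i. i \<in> E \<Longrightarrow> (\<And>j. j \<in> ch i \<Longrightarrow> P j) \<Longrightarrow> P i"
  shows "P i"
proof -
  have "i \<in> E \<longrightarrow> P i"
    by (induction i rule: wf_induct_rule[OF wf_converse_child_rel])
      (use assms(2) in \<open>auto simp: children_iff child_rel_iff\<close>)
  then show ?thesis using assms(1) by blast
qed

lemma children_subset: "ch i \<subseteq> E"
  by (auto simp: children_iff)

lemma finite_children: "finite (ch i)"
  using children_subset finite_E finite_subset by blast

lemma descendants_self: "i \<in> desc i"
  by (simp add: descendants_iff)

lemma descendants_trans: "j \<in> desc i \<Longrightarrow> l \<in> desc j \<Longrightarrow> l \<in> desc i"
  by (auto simp: descendants_iff)

lemma child_in_descendants: "i \<in> E \<Longrightarrow> j \<in> ch i \<Longrightarrow> j \<in> desc i"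
  by (auto simp: descendants_iff children_child_rel)

lemma descendants_subset: "i \<in> E \<Longrightarrow> desc i \<subseteq> E"
proof
  fix l assume "i \<in> E" "l \<in> desc i"
  from \<open>l \<in> desc i\<close> have "(i, l) \<in> child\<^sup>*" by (simp add: descendants_iff)
  then show "l \<in> E"
    using \<open>i \<in> E\<close> by (induction rule: rtrancl_induct) (auto simp: child_rel_iff)
qed

lemma finite_descendants: "i \<in> E \<Longrightarrow> finite (desc i)"
  using descendants_subset finite_E finite_subset by blast

lemma descendants_unfold: "i \<in> E \<Longrightarrow> desc i = insert i (\<Union>j\<in>ch i. desc j)"
proof (intro set_eqI iffI)
  fix l assume i: "i \<in> E" and "l \<in> desc i"
  then have "(i, l) \<in> child\<^sup>*" by (simp add: descendants_iff)
  then show "l \<in> insert i (\<Union>j\<in>ch i. desc j)"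
    by (cases rule: converse_rtranclE) (use i in \<open>auto simp: descendants_iff children_child_rel\<close>)
next
  fix l assume "i \<in> E" "l \<in> insert i (\<Union>j\<in>ch i. desc j)"
  then show "l \<in> desc i"
    using descendants_self child_in_descendants descendants_trans by blast
qed

lemma not_in_descendants_child: "i \<in> E \<Longrightarrow> j \<in> ch i \<Longrightarrow> i \<notin> desc j"
  using acyclic_child_rel
  by (auto simp: children_child_rel descendants_iff acyclic_def dest: rtrancl_into_trancl2)

text \<open>A link lies in some tree \<open>E\<^sub>k\<close>, and all its descendants lie in the same tree, so inside any
  subtree every link has at most one parent.\<close>

lemma parent_unique:
  assumes "a \<in> E" "p \<in> desc a" "q \<in> desc a" "(p, l) \<in> child" "(q, l) \<in> child"
  shows "p = q"
proof -
  obtain k where k: "k \<in> {1..K}" "a \<in> desc (S k)"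
    using link_in_some_tree assms(1) by blast
  have pq: "p \<in> parents hed tal E l" "q \<in> parents hed tal E l"
    using assms(4,5) by (auto simp: child_rel_iff parents_def)
  then have "l \<noteq> S k" using root_no_parents[OF k(1)] by auto
  moreover have "l \<in> desc (S k)" "p \<in> desc (S k)" "q \<in> desc (S k)"
    using assms k descendants_trans by (auto simp: descendants_iff)
  ultimately show ?thesis
    using unique_parent_in_tree[OF k(1)] pq by blast
qed

lemma tree_parent_eqI:
  assumes "a \<in> E" "B \<subseteq> desc a" "l \<in> B" "p \<in> B" "(p, l) \<in> child"
  shows "tp B l = p"
  unfolding tree_parent_def
proof (rule the_equality)
  show "p \<in> parents hed tal E l \<inter> B"
    using assms by (auto simp: parents_def child_rel_iff)
next
  fix q assume "q \<in> parents hed tal E l \<inter> B"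
  then show "q = p"
    using assms parent_unique[of a q p l] by (auto simp: parents_def child_rel_iff)
qed

lemma tree_parent_child: "a \<in> E \<Longrightarrow> j \<in> ch a \<Longrightarrow> tp (desc a) j = a"
  by (intro tree_parent_eqI[of a]) (auto simp: child_in_descendants descendants_self children_child_rel)

lemma tree_parent_in_subtree:
  assumes i: "i \<in> E" "i \<in> desc a" and a: "a \<in> E" and l: "l \<in> desc i" "l \<noteq> i"
  shows "tp (desc a) l = tp (desc i) l" "tp (desc i) l \<in> desc i" "(tp (desc i) l, l) \<in> child"
proof -
  obtain m where m: "(i, m) \<in> child\<^sup>*" "(m, l) \<in> child"
    using l by (auto simp: descendants_iff elim: rtranclE)
  have "m \<in> desc i" using m(1) by (simp add: descendants_iff)
  moreover have "desc i \<subseteq> desc a" using i descendants_trans by blast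
  ultimately have "tp (desc i) l = m" "tp (desc a) l = m"
    using l(1) by (auto intro!: tree_parent_eqI[OF a _ _ _ m(2)])
  then show "tp (desc a) l = tp (desc i) l" "tp (desc i) l \<in> desc i" "(tp (desc i) l, l) \<in> child"
    using \<open>m \<in> desc i\<close> m(2) by simp_all
qed

lemma descendants_comparable:
  assumes c: "c \<in> E" "a \<in> desc c" "b \<in> desc c" and "l \<in> desc a" "l \<in> desc b"
  shows "a \<in> desc b \<or> b \<in> desc a"
proof -
  have "(a, l) \<in> child\<^sup>*" "(b, l) \<in> child\<^sup>*"
    using assms by (simp_all add: descendants_iff)
  then show ?thesis
  proof (induction rule: rtrancl_induct)
    case (step m l)
    from step.prems show ?case
    proof (cases rule: rtranclE)
      case base
      then show ?thesis using step by (auto simp: descendants_iff intro: rtrancl_into_rtrancl)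
    next
      case (step m')
      have "m \<in> desc c" "m' \<in> desc c"
        using c \<open>(a, m) \<in> child\<^sup>*\<close> \<open>(b, m') \<in> child\<^sup>*\<close>
        unfolding descendants_iff by (meson rtrancl_trans)+
      then have "m = m'"
        using parent_unique[OF c(1)] \<open>(m, l) \<in> child\<close> \<open>(m', l) \<in> child\<close> by blast
      then show ?thesis using step.IH \<open>(b, m') \<in> child\<^sup>*\<close> by blast
    qed
  qed (simp add: descendants_iff)
qed

lemma sibling_not_descendant:
  assumes i: "i \<in> E" and j: "j \<in> ch i" "j' \<in> ch i" "j \<noteq> j'"
  shows "j \<notin> desc j'"
proof
  assume "j \<in> desc j'"
  then obtain m where m: "(j', m) \<in> child\<^sup>*" "(m, j) \<in> child"
    using j(3) by (auto simp: descendants_iff elim: rtranclE)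
  have "m \<in> desc i"
    using m(1) child_in_descendants[OF i j(2)] descendants_trans by (auto simp: descendants_iff)
  then have "m = i"
    using parent_unique[OF i _ descendants_self m(2)] i j(1) children_child_rel by blast
  then show False
    using m(1) not_in_descendants_child[OF i j(2)] by (simp add: descendants_iff)
qed

lemma disjoint_descendants_children:
  assumes i: "i \<in> E" and j: "j \<in> ch i" "j' \<in> ch i" "j \<noteq> j'"
  shows "desc j \<inter> desc j' = {}"
  using descendants_comparable[OF i child_in_descendants[OF i j(1)] child_in_descendants[OF i j(2)]]
    sibling_not_descendant[OF i] j by blast

lemma sum_descendants:
  assumes i: "i \<in> E"
  shows "sum f (desc i) = f i + (\<Sum>j\<in>ch i. sum f (desc j))"
proof -
  have fin: "finite (\<Union>j\<in>ch i. desc j)"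
    using finite_children children_subset finite_descendants by blast
  have "i \<notin> (\<Union>j\<in>ch i. desc j)"
    using not_in_descendants_child[OF i] by blast
  then show ?thesis
    using fin finite_children children_subset finite_descendants disjoint_descendants_children[OF i]
    by (subst descendants_unfold[OF i]) (auto simp: sum.UNION_disjoint)
qed

lemma prod_descendants:
  assumes i: "i \<in> E"
  shows "prod f (desc i) = f i * (\<Prod>j\<in>ch i. prod f (desc j))"
proof -
  have fin: "finite (\<Union>j\<in>ch i. desc j)"
    using finite_children children_subset finite_descendants by blast
  have "i \<notin> (\<Union>j\<in>ch i. desc j)"
    using not_in_descendants_child[OF i] by blast
  then show ?thesis
    using fin finite_children children_subset finite_descendants disjoint_descendants_children[OF i]
    by (subst descendants_unfold[OF i]) (auto simp: prod.UNION_disjoint)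
qed

lemma leaf_desc_leaf: "i \<in> E \<Longrightarrow> leaf i \<Longrightarrow> ldesc i = {i}"
  using descendants_unfold[of i] by (auto simp: leaf_desc_def leaves_def is_leaf_iff)

lemma leaf_desc_nonleaf: "i \<in> E \<Longrightarrow> \<not> leaf i \<Longrightarrow> ldesc i = (\<Union>j\<in>ch i. ldesc j)"
  using descendants_unfold[of i] by (auto simp: leaf_desc_def leaves_def)

lemma leaf_desc_mono: "j \<in> desc i \<Longrightarrow> ldesc j \<subseteq> ldesc i"
  using descendants_trans by (auto simp: leaf_desc_def)

section \<open>The parametrisations \<open>\<xi> = \<Gamma> \<theta>\<close> and \<open>\<psi> = \<Lambda> \<xi>\<close>\<close>

abbreviation "\<Gamma> \<equiv> Gamma hed tal E"
abbreviation "\<Lambda> \<equiv> Lambda hed tal E"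

lemma Theta_space_bounds: "\<theta> \<in> Theta_space E \<Longrightarrow> i \<in> E \<Longrightarrow> 0 < \<theta> i \<and> \<theta> i < 1"
  unfolding Theta_space_def by auto

definition Gamma_rec :: "('l \<Rightarrow> real) \<Rightarrow> ('l \<Rightarrow> real) \<Rightarrow> bool" where
  "Gamma_rec \<theta> g \<longleftrightarrow> g \<in> extensional E \<and>
     (\<forall>i\<in>E. g i = (if leaf i then \<theta> i else \<theta> i + (1 - \<theta> i) * (\<Prod>j\<in>ch i. g j)))"

lemma Gamma_rec_exists: "\<exists>g. Gamma_rec \<theta> g"
proof
  define F where "F f i = (if i \<in> E then (if leaf i then \<theta> i else \<theta> i + (1 - \<theta> i) * (\<Prod>j\<in>ch i. f j))
    else undefined)" for f i
  define g where "g = wfrec (child\<inverse>) F"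
  have "g i = F g i" for i
  proof -
    have "g i = F (cut g (child\<inverse>) i) i"
      unfolding g_def by (rule wfrec[OF wf_converse_child_rel])
    also have "\<dots> = F g i"
      unfolding F_def by (auto intro!: prod.cong cut_apply simp: children_child_rel)
    finally show ?thesis .
  qed
  then show "Gamma_rec \<theta> g"
    unfolding Gamma_rec_def by (auto simp: extensional_def F_def)
qed

lemma Gamma_rec_unique: "Gamma_rec \<theta> g \<Longrightarrow> Gamma_rec \<theta> g' \<Longrightarrow> g = g'"
proof (rule extensionalityI)
  assume g: "Gamma_rec \<theta> g" and g': "Gamma_rec \<theta> g'"
  then show "g \<in> extensional E" "g' \<in> extensional E"
    by (simp_all add: Gamma_rec_def)
  fix i assume "i \<in> E"
  then show "g i = g' i"
  proof (induction rule: link_induct)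
    case (step i)
    then show ?case using g g' unfolding Gamma_rec_def by (auto intro!: prod.cong)
  qed
qed

lemma Gamma_rec_Gamma: "Gamma_rec \<theta> (\<Gamma> \<theta>)"
proof -
  have "Gamma_rec \<theta> (THE g. Gamma_rec \<theta> g)"
    using Gamma_rec_exists Gamma_rec_unique by (metis theI)
  then show ?thesis
    unfolding Gamma_def Gamma_rec_def .
qed

lemma Gamma_extensional: "\<Gamma> \<theta> \<in> extensional E"
  using Gamma_rec_Gamma by (simp add: Gamma_rec_def)

lemma Gamma_eq:
  "i \<in> E \<Longrightarrow> \<Gamma> \<theta> i = (if leaf i then \<theta> i else \<theta> i + (1 - \<theta> i) * (\<Prod>j\<in>ch i. \<Gamma> \<theta> j))"
  using Gamma_rec_Gamma by (simp add: Gamma_rec_def)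

lemma Gamma_bounds:
  assumes \<theta>: "\<theta> \<in> Theta_space E" and "i \<in> E"
  shows "0 < \<Gamma> \<theta> i \<and> \<Gamma> \<theta> i < 1"
  using \<open>i \<in> E\<close>
proof (induction rule: link_induct)
  case (step i)
  have t: "0 < \<theta> i" "\<theta> i < 1"
    using Theta_space_bounds[OF \<theta> step(1)] by auto
  show ?case
  proof (cases "leaf i")
    case True
    then show ?thesis using t Gamma_eq[OF step(1)] by simp
  next
    case False
    let ?P = "\<Prod>j\<in>ch i. \<Gamma> \<theta> j"
    have P: "0 < ?P" "?P < 1"
      using False step(2) less_imp_le
      by (auto simp: is_leaf_iff intro!: prod_pos prod_less_1 finite_children)
    have "0 < (1 - \<theta> i) * ?P"
      using t P by simp
    moreover have "(1 - \<theta> i) * ?P < 1 - \<theta> i"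
      using t P mult_strict_left_mono[of ?P 1 "1 - \<theta> i"] by simp
    moreover have "\<Gamma> \<theta> i = \<theta> i + (1 - \<theta> i) * ?P"
      using Gamma_eq[OF step(1)] False by simp
    ultimately show ?thesis
      using t by linarith
  qed
qed

lemma prod_children_Gamma_pos: "\<theta> \<in> Theta_space E \<Longrightarrow> 0 < (\<Prod>j\<in>ch i. \<Gamma> \<theta> j)"
  using Gamma_bounds children_subset by (intro prod_pos) blast

lemma prod_children_Gamma_less_1:
  "\<theta> \<in> Theta_space E \<Longrightarrow> \<not> leaf i \<Longrightarrow> (\<Prod>j\<in>ch i. \<Gamma> \<theta> j) < 1"
  using Gamma_bounds children_subset less_imp_le
  by (intro prod_less_1 finite_children) (auto simp: is_leaf_iff, blast+)

lemma theta_of_Gamma: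
  assumes \<theta>: "\<theta> \<in> Theta_space E" and i: "i \<in> E"
  shows "theta_of hed tal E (\<Gamma> \<theta>) i = \<theta> i"
  using Gamma_eq[OF i] prod_children_Gamma_less_1[OF \<theta>, of i]
  by (auto simp: theta_of_def field_simps)

lemma Lambda_Gamma:
  assumes \<theta>: "\<theta> \<in> Theta_space E" and i: "i \<in> E"
  shows "\<Lambda> (\<Gamma> \<theta>) i = ln (1 - \<theta> i) + ln (\<Prod>j\<in>ch i. \<Gamma> \<theta> j) - ln (\<Gamma> \<theta> i)"
proof -
  have "0 < 1 - \<theta> i" using Theta_space_bounds[OF \<theta> i] by simp
  moreover have "0 < \<Gamma> \<theta> i" using Gamma_bounds[OF \<theta> i] by simp
  moreover have "0 < (\<Prod>j\<in>ch i. \<Gamma> \<theta> j)" using prod_children_Gamma_pos[OF \<theta>] .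
  moreover have "\<not> leaf i \<Longrightarrow> \<Gamma> \<theta> i - \<theta> i = (1 - \<theta> i) * (\<Prod>j\<in>ch i. \<Gamma> \<theta> j)"
    using Gamma_eq[OF i] by simp
  ultimately show ?thesis
    using i theta_of_Gamma[OF \<theta> i] by (auto simp: Lambda_def ln_div ln_mult is_leaf_iff)
qed

text \<open>The form of \<open>\<Lambda>\<close> in which \<open>\<psi>\<^sub>i\<close> is a strictly monotone function of \<open>\<xi>\<^sub>i\<close> once the values
  \<open>\<xi>\<^sub>j\<close> of the children are fixed; this gives injectivity.\<close>

lemma Lambda_Gamma_odds:
  assumes \<theta>: "\<theta> \<in> Theta_space E" and i: "i \<in> E"
  shows "\<Lambda> (\<Gamma> \<theta>) i = ln ((if leaf i then 1 else (\<Prod>j\<in>ch i. \<Gamma> \<theta> j) / (1 - (\<Prod>j\<in>ch i. \<Gamma> \<theta> j)))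
                           * ((1 - \<Gamma> \<theta> i) / \<Gamma> \<theta> i))"
proof (cases "leaf i")
  case True
  then show ?thesis using i theta_of_Gamma[OF \<theta> i] Gamma_eq[OF i] by (simp add: Lambda_def)
next
  case False
  let ?P = "\<Prod>j\<in>ch i. \<Gamma> \<theta> j"
  have P: "?P < 1" using prod_children_Gamma_less_1[OF \<theta> False] .
  have g: "0 < \<Gamma> \<theta> i" using Gamma_bounds[OF \<theta> i] by simp
  have eqs: "\<Gamma> \<theta> i - \<theta> i = (1 - \<theta> i) * ?P" "1 - \<Gamma> \<theta> i = (1 - \<theta> i) * (1 - ?P)"
    using Gamma_eq[OF i] False by (simp_all add: algebra_simps)
  have "(\<Gamma> \<theta> i - \<theta> i) / \<Gamma> \<theta> i = ?P / (1 - ?P) * ((1 - \<Gamma> \<theta> i) / \<Gamma> \<theta> i)"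
    using P g by (simp only: eqs) (simp add: field_simps)
  then show ?thesis
    using False i theta_of_Gamma[OF \<theta> i] by (simp add: Lambda_def)
qed

lemma inj_on_Lambda: "inj_on \<Lambda> (Xi_space hed tal E)"
proof (rule inj_onI)
  fix x y assume "x \<in> Xi_space hed tal E" "y \<in> Xi_space hed tal E" and eq: "\<Lambda> x = \<Lambda> y"
  then obtain \<theta> \<theta>' where \<theta>: "\<theta> \<in> Theta_space E" "\<theta>' \<in> Theta_space E"
    and x: "x = \<Gamma> \<theta>" and y: "y = \<Gamma> \<theta>'"
    by (auto simp: Xi_space_def)
  have "x i = y i" if "i \<in> E" for i
    using that
  proof (induction rule: link_induct)
    case (step i)
    define c where "c = (if leaf i then 1 else (\<Prod>j\<in>ch i. x j) / (1 - (\<Prod>j\<in>ch i. x j)))"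
    have c_pos: "0 < c"
      unfolding c_def x
      using prod_children_Gamma_pos[OF \<theta>(1)] prod_children_Gamma_less_1[OF \<theta>(1)] by simp
    have xy: "0 < x i" "x i < 1" "0 < y i" "y i < 1"
      using Gamma_bounds[OF \<theta>(1) step(1)] Gamma_bounds[OF \<theta>(2) step(1)] x y by auto
    have "(\<Prod>j\<in>ch i. x j) = (\<Prod>j\<in>ch i. y j)"
      using step(2) by (auto intro!: prod.cong)
    then have "ln (c * ((1 - x i) / x i)) = ln (c * ((1 - y i) / y i))"
      using eq Lambda_Gamma_odds[OF \<theta>(1) step(1)] Lambda_Gamma_odds[OF \<theta>(2) step(1)]
      unfolding c_def x y by metis
    then have "c * ((1 - x i) / x i) = c * ((1 - y i) / y i)"
      using c_pos xy by (subst (asm) ln_inj_iff) auto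
    then have "(1 - x i) / x i = (1 - y i) / y i"
      by (metis c_pos less_irrefl mult_left_cancel)
    then have "1 / x i = 1 / y i"
      using xy by (simp add: diff_divide_distrib)
    then show ?case by simp
  qed
  then show "x = y"
    unfolding x y by (intro extensionalityI[OF Gamma_extensional Gamma_extensional]) (use x y in auto)
qed

section \<open>Sum-product recursion for the loss model\<close>

definition pass_prob :: "('l \<Rightarrow> real) \<Rightarrow> 'l \<Rightarrow> bool \<Rightarrow> bool \<Rightarrow> real" where
  "pass_prob \<theta> l y x = (if y then (if x then 1 - \<theta> l else \<theta> l) else (if x then 0 else 1))"

text \<open>\<open>subtree_weight \<theta> w a y\<close> is the expectation of \<open>\<Prod>\<^sub>l w l (X\<^sub>l)\<close> over the subtree of \<open>a\<close>,
  given that the tail of \<open>a\<close> is reached iff \<open>y\<close>. For \<open>0/1\<close>-valued weights it is the probability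
  of an event that constrains each link separately, and it satisfies a sum-product recursion.\<close>

definition config_weight :: "('l \<Rightarrow> real) \<Rightarrow> ('l \<Rightarrow> bool \<Rightarrow> real) \<Rightarrow> 'l \<Rightarrow> bool \<Rightarrow> 'l set \<Rightarrow> real" where
  "config_weight \<theta> w a y V =
     (\<Prod>l\<in>desc a. pass_prob \<theta> l (if l = a then y else tp (desc a) l \<in> V) (l \<in> V) * w l (l \<in> V))"

definition subtree_weight :: "('l \<Rightarrow> real) \<Rightarrow> ('l \<Rightarrow> bool \<Rightarrow> real) \<Rightarrow> 'l \<Rightarrow> bool \<Rightarrow> real" where
  "subtree_weight \<theta> w a y = (\<Sum>V\<in>Pow (desc a). config_weight \<theta> w a y V)"

lemma config_weight_split:
  assumes a: "a \<in> E" and V: "V \<subseteq> (\<Union>j\<in>ch a. desc j)"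
  shows "config_weight \<theta> w a y (if x then insert a V else V)
    = pass_prob \<theta> a y x * w a x * (\<Prod>j\<in>ch a. config_weight \<theta> w j x (V \<inter> desc j))"
proof -
  let ?V = "if x then insert a V else V"
  let ?h = "\<lambda>l. pass_prob \<theta> l (if l = a then y else tp (desc a) l \<in> ?V) (l \<in> ?V) * w l (l \<in> ?V)"
  have aV: "a \<in> ?V \<longleftrightarrow> x"
    using V not_in_descendants_child[OF a] by auto
  have "(\<Prod>l\<in>desc j. ?h l) = config_weight \<theta> w j x (V \<inter> desc j)" if j: "j \<in> ch a" for j
    unfolding config_weight_def
  proof (rule prod.cong[OF refl])
    fix l assume l: "l \<in> desc j"
    have la: "l \<noteq> a"
      using l not_in_descendants_child[OF a j] by blast
    have "(if l = a then y else tp (desc a) l \<in> ?V) = (if l = j then x else tp (desc j) l \<in> V \<inter> desc j)"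
    proof (cases "l = j")
      case True
      then show ?thesis using tree_parent_child[OF a j] aV la by simp
    next
      case False
      have "j \<in> E" using j children_subset by blast
      then have "tp (desc a) l = tp (desc j) l" "tp (desc j) l \<in> desc j"
        using tree_parent_in_subtree[OF _ child_in_descendants[OF a j] a l False] by auto
      moreover from this have "tp (desc j) l \<noteq> a"
        using not_in_descendants_child[OF a j] by blast
      ultimately show ?thesis using la False by auto
    qed
    moreover have "l \<in> ?V \<longleftrightarrow> l \<in> V \<inter> desc j"
      using l la by auto
    ultimately show "?h l = pass_prob \<theta> l (if l = j then x else tp (desc j) l \<in> V \<inter> desc j) (l \<in> V \<inter> desc j)
        * w l (l \<in> V \<inter> desc j)"
      by simp
  qed
  then show ?thesis
    unfolding config_weight_def using aV by (simp add: prod_descendants[OF a])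
qed

lemma subtree_weight_rec:
  assumes a: "a \<in> E"
  shows "subtree_weight \<theta> w a y =
      pass_prob \<theta> a y True * w a True * (\<Prod>j\<in>ch a. subtree_weight \<theta> w j True)
    + pass_prob \<theta> a y False * w a False * (\<Prod>j\<in>ch a. subtree_weight \<theta> w j False)"
proof -
  let ?D = "\<Union>j\<in>ch a. desc j"
  have aD: "a \<notin> ?D"
    using not_in_descendants_child[OF a] by blast
  have finD: "finite ?D"
    using finite_children finite_descendants children_subset by blast
  have factor: "(\<Sum>V\<in>Pow ?D. \<Prod>j\<in>ch a. config_weight \<theta> w j x (V \<inter> desc j))
      = (\<Prod>j\<in>ch a. subtree_weight \<theta> w j x)" for x
    unfolding subtree_weight_def
    using finite_children finite_descendants children_subset disjoint_descendants_children[OF a]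
    by (intro sum_Pow_UNION_prod) blast+
  have "subtree_weight \<theta> w a y
      = (\<Sum>V\<in>Pow ?D. config_weight \<theta> w a y V) + (\<Sum>V\<in>Pow ?D. config_weight \<theta> w a y (insert a V))"
    unfolding subtree_weight_def by (subst descendants_unfold[OF a]) (rule sum_Pow_insert[OF aD finD])
  also have "\<dots> = (\<Sum>V\<in>Pow ?D. pass_prob \<theta> a y False * w a False
                     * (\<Prod>j\<in>ch a. config_weight \<theta> w j False (V \<inter> desc j)))
                + (\<Sum>V\<in>Pow ?D. pass_prob \<theta> a y True * w a True
                     * (\<Prod>j\<in>ch a. config_weight \<theta> w j True (V \<inter> desc j)))"
    using config_weight_split[OF a, of _ \<theta> w y False] config_weight_split[OF a, of _ \<theta> w y True]
    by (intro arg_cong2[where f = "(+)"] sum.cong) auto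
  finally show ?thesis
    by (simp add: sum_distrib_left[symmetric] factor)
qed

lemma subtree_weight_cong:
  "(\<And>l x. l \<in> desc a \<Longrightarrow> w l x = w' l x) \<Longrightarrow> subtree_weight \<theta> w a y = subtree_weight \<theta> w' a y"
  unfolding subtree_weight_def config_weight_def by (intro sum.cong prod.cong) auto

lemma tree_prob_eq_subtree_weight:
  assumes a: "a \<in> E" and P: "\<And>U. U \<subseteq> desc a \<Longrightarrow> P U \<longleftrightarrow> (\<forall>l\<in>desc a. Q l (l \<in> U))"
  shows "tree_prob hed tal E \<theta> (desc a) a P = subtree_weight \<theta> (\<lambda>l x. of_bool (Q l x)) a True"
proof -
  have "tree_prob hed tal E \<theta> (desc a) a P
      = (\<Sum>U\<in>Pow (desc a). if P U then config_prob hed tal E \<theta> (desc a) a U else 0)"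
    unfolding tree_prob_def using finite_descendants[OF a]
    by (simp add: sum.inter_filter[symmetric] Pow_def Collect_conj_eq[symmetric])
  also have "\<dots> = subtree_weight \<theta> (\<lambda>l x. of_bool (Q l x)) a True"
    unfolding subtree_weight_def
  proof (rule sum.cong[OF refl])
    fix U assume U: "U \<in> Pow (desc a)"
    have "config_weight \<theta> (\<lambda>l x. of_bool (Q l x)) a True U
        = config_prob hed tal E \<theta> (desc a) a U * (\<Prod>l\<in>desc a. of_bool (Q l (l \<in> U)))"
      unfolding config_weight_def config_prob_def prod.distrib[symmetric]
      by (intro prod.cong) (auto simp: pass_prob_def)
    also have "(\<Prod>l\<in>desc a. of_bool (Q l (l \<in> U))) = (of_bool (P U) :: real)"
      unfolding prod_of_bool[OF finite_descendants[OF a]] using P U by simp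
    finally show "(if P U then config_prob hed tal E \<theta> (desc a) a U else 0)
        = config_weight \<theta> (\<lambda>l x. of_bool (Q l x)) a True U"
      by simp
  qed
  finally show ?thesis .
qed

section \<open>Probability of an observation\<close>

definition obs_weight :: "'l set \<Rightarrow> 'l \<Rightarrow> bool \<Rightarrow> real" where
  "obs_weight Ob l x = of_bool (l \<in> lvs \<longrightarrow> (x \<longleftrightarrow> l \<in> Ob))"

abbreviation obs_prob :: "('l \<Rightarrow> real) \<Rightarrow> 'l set \<Rightarrow> 'l \<Rightarrow> real" where
  "obs_prob \<theta> Ob a \<equiv> subtree_weight \<theta> (obs_weight Ob) a True"

text \<open>\<open>seen Ob l\<close> is the internal view \<open>Y\<^sub>l\<close> of a probe whose observed leaves are \<open>Ob\<close>.\<close>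

abbreviation seen :: "'l set \<Rightarrow> 'l \<Rightarrow> bool" where
  "seen Ob l \<equiv> ldesc l \<inter> Ob \<noteq> {}"

lemma obs_weight_leaf: "a \<in> E \<Longrightarrow> leaf a \<Longrightarrow> obs_weight Ob a x = of_bool (x \<longleftrightarrow> a \<in> Ob)"
  by (simp add: obs_weight_def leaves_def)

lemma obs_weight_nonleaf: "\<not> leaf a \<Longrightarrow> obs_weight Ob a x = 1"
  by (simp add: obs_weight_def leaves_def)

lemma seen_mono: "l \<in> desc a \<Longrightarrow> seen Ob l \<Longrightarrow> seen Ob a"
  using leaf_desc_mono by blast

lemma seen_leaf: "a \<in> E \<Longrightarrow> leaf a \<Longrightarrow> seen Ob a \<longleftrightarrow> a \<in> Ob"
  using leaf_desc_leaf by simp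

lemma not_seen_children: "a \<in> E \<Longrightarrow> \<not> leaf a \<Longrightarrow> \<not> seen Ob a \<longleftrightarrow> (\<forall>j\<in>ch a. \<not> seen Ob j)"
  using leaf_desc_nonleaf by auto

lemma subtree_weight_obs_unreached:
  assumes "a \<in> E"
  shows "subtree_weight \<theta> (obs_weight Ob) a False = of_bool (\<not> seen Ob a)"
  using assms
proof (induction rule: link_induct)
  case (step a)
  show ?case
  proof (cases "leaf a")
    case True
    then show ?thesis
      using subtree_weight_rec[OF step(1)] seen_leaf[OF step(1)]
      using True by (simp add: pass_prob_def obs_weight_leaf[OF step(1) True] is_leaf_iff)
  next
    case False
    then have "subtree_weight \<theta> (obs_weight Ob) a False = (\<Prod>j\<in>ch a. of_bool (\<not> seen Ob j))"
      using subtree_weight_rec[OF step(1)] step(2)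
      by (simp add: pass_prob_def obs_weight_nonleaf)
    also have "\<dots> = of_bool (\<not> seen Ob a)"
      unfolding prod_of_bool[OF finite_children] using not_seen_children[OF step(1) False] by simp
    finally show ?thesis .
  qed
qed

text \<open>Given that the tail of \<open>a\<close> is reached, the probability that no leaf below \<open>a\<close> is reached is
  \<open>\<xi>\<^sub>a\<close>; this is the probabilistic meaning of \<open>\<Gamma>\<close>.\<close>

lemma obs_prob_rec:
  assumes "a \<in> E"
  shows "obs_prob \<theta> Ob a =
    (if seen Ob a then (1 - \<theta> a) * (\<Prod>j\<in>ch a. obs_prob \<theta> Ob j) else \<Gamma> \<theta> a)"
  using assms
proof (induction rule: link_induct)
  case (step a)
  show ?case
  proof (cases "leaf a")
    case True
    then show ?thesis
      using subtree_weight_rec[OF step(1)] seen_leaf[OF step(1)] Gamma_eq[OF step(1)]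
      using True by (simp add: pass_prob_def obs_weight_leaf[OF step(1) True] is_leaf_iff)
  next
    case False
    have "(\<Prod>j\<in>ch a. subtree_weight \<theta> (obs_weight Ob) j False) = (\<Prod>j\<in>ch a. of_bool (\<not> seen Ob j))"
      using subtree_weight_obs_unreached children_subset by (intro prod.cong) blast+
    also have "\<dots> = of_bool (\<not> seen Ob a)"
      unfolding prod_of_bool[OF finite_children] using not_seen_children[OF step(1) False] by simp
    finally have "obs_prob \<theta> Ob a
        = (1 - \<theta> a) * (\<Prod>j\<in>ch a. obs_prob \<theta> Ob j) + \<theta> a * of_bool (\<not> seen Ob a)"
      using subtree_weight_rec[OF step(1)] False by (simp add: pass_prob_def obs_weight_nonleaf)
    moreover have "\<not> seen Ob a \<Longrightarrow>
        (\<Prod>j\<in>ch a. obs_prob \<theta> Ob j) = (\<Prod>j\<in>ch a. \<Gamma> \<theta> j)"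
      using step(2) not_seen_children[OF step(1) False] by (intro prod.cong) auto
    ultimately show ?thesis
      using Gamma_eq[OF step(1)] False by auto
  qed
qed

lemma obs_prob_pos:
  assumes \<theta>: "\<theta> \<in> Theta_space E" and "a \<in> E"
  shows "0 < obs_prob \<theta> Ob a"
  using \<open>a \<in> E\<close>
proof (induction rule: link_induct)
  case (step a)
  have "0 < (\<Prod>j\<in>ch a. obs_prob \<theta> Ob j)"
    using step(2) by (intro prod_pos) blast
  then show ?case
    using obs_prob_rec[OF step(1)] Theta_space_bounds[OF \<theta> step(1)] Gamma_bounds[OF \<theta> step(1)]
    by simp
qed

text \<open>A probe sent into the subtree of \<open>a\<close> is lost at \<open>l\<close> when it reaches the tail of \<open>l\<close> but no
  leaf below \<open>l\<close> is observed; summing over probes gives the counts \<open>n\<^sub>k\<^sub>,\<^sub>l(0)\<close>.\<close>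

abbreviation lost :: "'l set \<Rightarrow> 'l \<Rightarrow> 'l \<Rightarrow> bool" where
  "lost Ob a l \<equiv> \<not> seen Ob l \<and> (l = a \<or> seen Ob (tp (desc a) l))"

lemma ln_obs_prob_seen:
  assumes \<theta>: "\<theta> \<in> Theta_space E" and a: "a \<in> E" and "seen Ob a"
  shows "ln (obs_prob \<theta> Ob a) = ln (1 - \<theta> a) + (\<Sum>j\<in>ch a. ln (obs_prob \<theta> Ob j))"
proof -
  have pos: "0 < obs_prob \<theta> Ob j" if "j \<in> ch a" for j
    using obs_prob_pos[OF \<theta>] that children_subset by blast
  have "0 < 1 - \<theta> a"
    using Theta_space_bounds[OF \<theta> a] by simp
  then have "ln (obs_prob \<theta> Ob a) = ln (1 - \<theta> a) + ln (\<Prod>j\<in>ch a. obs_prob \<theta> Ob j)"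
    using obs_prob_rec[OF a] \<open>seen Ob a\<close> pos by (simp add: ln_mult_pos prod_pos)
  also have "ln (\<Prod>j\<in>ch a. obs_prob \<theta> Ob j) = (\<Sum>j\<in>ch a. ln (obs_prob \<theta> Ob j))"
    using pos by (intro ln_prod finite_children) (metis less_irrefl)
  finally show ?thesis .
qed

lemma ln_obs_prob_theta_form:
  assumes \<theta>: "\<theta> \<in> Theta_space E" and "a \<in> E"
  shows "ln (obs_prob \<theta> Ob a) = (\<Sum>l\<in>desc a.
      (if seen Ob l then ln (1 - \<theta> l) else 0) + (if lost Ob a l then ln (\<Gamma> \<theta> l) else 0))"
  using \<open>a \<in> E\<close>
proof (induction rule: link_induct)
  case (step a)
  let ?f = "\<lambda>a l. (if seen Ob l then ln (1 - \<theta> l) else 0) + (if lost Ob a l then ln (\<Gamma> \<theta> l) else 0)"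
  show ?case
  proof (cases "seen Ob a")
    case False
    have "?f a l = (if l = a then ln (\<Gamma> \<theta> a) else 0)" if l: "l \<in> desc a" for l
    proof -
      have "\<not> seen Ob l"
        using seen_mono[OF l] False by blast
      moreover have "l \<noteq> a \<Longrightarrow> \<not> seen Ob (tp (desc a) l)"
        using tree_parent_in_subtree[OF step(1) descendants_self step(1) l] seen_mono False by blast
      ultimately show ?thesis by auto
    qed
    then have "(\<Sum>l\<in>desc a. ?f a l) = ln (\<Gamma> \<theta> a)"
      using finite_descendants[OF step(1)] descendants_self by simp
    then show ?thesis
      using obs_prob_rec[OF step(1)] False by simp
  next
    case True
    have "(\<Sum>l\<in>desc j. ?f a l) = ln (obs_prob \<theta> Ob j)" if j: "j \<in> ch a" for j
    proof -
      have "?f a l = ?f j l" if l: "l \<in> desc j" for l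
      proof (cases "l = j")
        case True
        then show ?thesis
          using tree_parent_child[OF step(1) j] \<open>seen Ob a\<close> not_in_descendants_child[OF step(1) j] by auto
      next
        case False
        have "j \<in> E" using j children_subset by blast
        then have "tp (desc a) l = tp (desc j) l"
          using tree_parent_in_subtree[OF _ child_in_descendants[OF step(1) j] step(1) l False] by blast
        then show ?thesis
          using l not_in_descendants_child[OF step(1) j] False by auto
      qed
      then show ?thesis
        using step(2)[OF j] by simp
    qed
    then have "(\<Sum>l\<in>desc a. ?f a l) = ln (1 - \<theta> a) + (\<Sum>j\<in>ch a. ln (obs_prob \<theta> Ob j))"
      using True by (simp add: sum_descendants[OF step(1)])
    then show ?thesis
      using ln_obs_prob_seen[OF \<theta> step(1) True] by simp
  qed
qed

lemma ln_obs_prob_psi_form: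
  assumes \<theta>: "\<theta> \<in> Theta_space E" and "a \<in> E"
  shows "ln (obs_prob \<theta> Ob a) = ln (\<Gamma> \<theta> a) + (\<Sum>l\<in>desc a. if seen Ob l then \<Lambda> (\<Gamma> \<theta>) l else 0)"
  using \<open>a \<in> E\<close>
proof (induction rule: link_induct)
  case (step a)
  show ?case
  proof (cases "seen Ob a")
    case False
    have "(\<Sum>l\<in>desc a. if seen Ob l then \<Lambda> (\<Gamma> \<theta>) l else 0) = 0"
      using seen_mono[of _ a Ob] False by (intro sum.neutral) auto
    then show ?thesis
      using obs_prob_rec[OF step(1)] False by simp
  next
    case True
    have "ln (\<Prod>j\<in>ch a. \<Gamma> \<theta> j) = (\<Sum>j\<in>ch a. ln (\<Gamma> \<theta> j))"
      using Gamma_bounds[OF \<theta>] children_subset by (intro ln_prod finite_children) (metis less_irrefl subsetD)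
    then show ?thesis
      using ln_obs_prob_seen[OF \<theta> step(1) True] step(2) True Lambda_Gamma[OF \<theta> step(1)]
      by (simp add: sum_descendants[OF step(1)] sum.distrib)
  qed
qed

lemma cond_prob_pass_eq:
  assumes \<theta>: "\<theta> \<in> Theta_space E" and i: "i \<in> E" and "\<not> leaf i"
  shows "cond_prob_pass hed tal E \<theta> i = (1 - \<theta> i) * (\<Prod>j\<in>ch i. \<Gamma> \<theta> j) / \<Gamma> \<theta> i"
proof -
  let ?w = "\<lambda>l x. of_bool ((l = i \<longrightarrow> x) \<and> (l \<in> lvs \<longrightarrow> \<not> x)) :: real"
  have "tree_prob hed tal E \<theta> (desc i) i (\<lambda>U. U \<inter> ldesc i = {}) = obs_prob \<theta> {} i"
    unfolding obs_weight_def by (rule tree_prob_eq_subtree_weight[OF i]) (auto simp: leaf_desc_def)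
  also have "\<dots> = \<Gamma> \<theta> i"
    using obs_prob_rec[OF i] by simp
  finally have denominator: "tree_prob hed tal E \<theta> (desc i) i (\<lambda>U. U \<inter> ldesc i = {}) = \<Gamma> \<theta> i" .
  have "obs_prob \<theta> {} j = subtree_weight \<theta> ?w j True" if "j \<in> ch i" for j
    using not_in_descendants_child[OF i that] by (intro subtree_weight_cong) (auto simp: obs_weight_def)
  moreover have "obs_prob \<theta> {} j = \<Gamma> \<theta> j" if "j \<in> ch i" for j
    using obs_prob_rec[OF subsetD[OF children_subset that]] by simp
  ultimately have "subtree_weight \<theta> ?w i True = (1 - \<theta> i) * (\<Prod>j\<in>ch i. \<Gamma> \<theta> j)"
    using subtree_weight_rec[OF i] \<open>\<not> leaf i\<close> by (simp add: pass_prob_def leaves_def)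
  moreover have "tree_prob hed tal E \<theta> (desc i) i (\<lambda>U. i \<in> U \<and> U \<inter> ldesc i = {})
      = subtree_weight \<theta> ?w i True"
    by (rule tree_prob_eq_subtree_weight[OF i]) (auto simp: leaf_desc_def descendants_self)
  ultimately show ?thesis
    unfolding cond_prob_pass_def denominator by simp
qed

lemma Lambda_Gamma_cond_prob:
  assumes \<theta>: "\<theta> \<in> Theta_space E" and i: "i \<in> E" and "\<not> leaf i"
  shows "\<Lambda> (\<Gamma> \<theta>) i = ln (cond_prob_pass hed tal E \<theta> i)"
proof -
  have "0 < 1 - \<theta> i" "0 < (\<Prod>j\<in>ch i. \<Gamma> \<theta> j)" "0 < \<Gamma> \<theta> i"
    using Theta_space_bounds[OF \<theta> i] prod_children_Gamma_pos[OF \<theta>] Gamma_bounds[OF \<theta> i] by auto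
  then show ?thesis
    using Lambda_Gamma[OF \<theta> i] cond_prob_pass_eq[OF assms] by (simp add: ln_div ln_mult_pos)
qed

lemma one_minus_Gamma_div:
  assumes \<theta>: "\<theta> \<in> Theta_space E" and i: "i \<in> E"
  shows "(1 - \<Gamma> \<theta> i) / (1 - (if ch i = {} then 0 else \<Prod>j\<in>ch i. \<Gamma> \<theta> j)) = 1 - \<theta> i"
proof (cases "leaf i")
  case True
  then show ?thesis using Gamma_eq[OF i] by (simp add: is_leaf_iff)
next
  case False
  have "1 - \<Gamma> \<theta> i = (1 - \<theta> i) * (1 - (\<Prod>j\<in>ch i. \<Gamma> \<theta> j))"
    using Gamma_eq[OF i] False by (simp add: algebra_simps)
  then show ?thesis
    using False prod_children_Gamma_less_1[OF \<theta> False] by (simp add: is_leaf_iff)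
qed

section \<open>The log-likelihood\<close>

lemma loglik_eq_sum_ln_obs_prob:
  "loglik hed tal E K S n obs \<theta> = (\<Sum>k\<in>{1..K}. \<Sum>t\<in>{1..n k}. ln (obs_prob \<theta> (obs k t) (S k)))"
proof -
  have "tree_prob hed tal E \<theta> (desc (S k)) (S k) (\<lambda>U. U \<inter> lvs = Ob \<inter> lvs \<inter> desc (S k))
      = obs_prob \<theta> Ob (S k)" if "k \<in> {1..K}" for k Ob
    unfolding obs_weight_def by (rule tree_prob_eq_subtree_weight[OF root_in_E[OF that]]) auto
  then show ?thesis
    unfolding loglik_def by simp
qed

lemma cnt1_eq:
  "k \<in> {1..K} \<Longrightarrow> l \<in> desc (S k) \<Longrightarrow>
    cnt1 hed tal E K S n obs k l = real (card {t\<in>{1..n k}. seen (obs k t) l})"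
  by (simp add: cnt1_def)

lemma cnt1_outside: "l \<notin> desc (S k) \<Longrightarrow> cnt1 hed tal E K S n obs k l = 0"
  by (simp add: cnt1_def)

lemma cnt0_outside: "l \<notin> desc (S k) \<Longrightarrow> cnt0 hed tal E K S n obs k l = 0"
  using descendants_self[of "S k"] by (auto simp: cnt0_def)

lemma cnt0_eq:
  assumes k: "k \<in> {1..K}" and l: "l \<in> desc (S k)"
  shows "cnt0 hed tal E K S n obs k l = real (card {t\<in>{1..n k}. lost (obs k t) (S k) l})"
proof (cases "l = S k")
  case True
  have "{t\<in>{1..n k}. True} = {1..n k}"
    by blast
  then have "real (n k) = real (card {t\<in>{1..n k}. True})"
    by (simp only: card_atLeastAtMost)
  moreover have "cnt0 hed tal E K S n obs k l = real (n k) - real (card {t\<in>{1..n k}. seen (obs k t) l})"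
    using True k cnt1_eq[OF k l] by (simp add: cnt0_def)
  moreover have "real (card {t\<in>{1..n k}. True}) - real (card {t\<in>{1..n k}. seen (obs k t) l})
      = real (card {t\<in>{1..n k}. True \<and> \<not> seen (obs k t) l})"
    by (rule card_filter_diff) simp_all
  ultimately show ?thesis
    using True by simp
next
  case False
  let ?p = "tp (desc (S k)) l"
  have S: "S k \<in> E" using root_in_E[OF k] .
  have p: "?p \<in> desc (S k)" "(?p, l) \<in> child"
    using tree_parent_in_subtree[OF S descendants_self S l False] by auto
  then have "seen Ob l \<Longrightarrow> seen Ob ?p" for Ob
    using seen_mono[of l ?p Ob] by (auto simp: descendants_iff)
  then have "real (card {t\<in>{1..n k}. seen (obs k t) ?p}) - real (card {t\<in>{1..n k}. seen (obs k t) l})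
      = real (card {t\<in>{1..n k}. seen (obs k t) ?p \<and> \<not> seen (obs k t) l})"
    by (intro card_filter_diff) auto
  moreover have "cnt0 hed tal E K S n obs k l
      = real (card {t\<in>{1..n k}. seen (obs k t) ?p}) - real (card {t\<in>{1..n k}. seen (obs k t) l})"
    using False k l cnt1_eq[OF k l] cnt1_eq[OF k p(1)] by (simp add: cnt0_def)
  ultimately show ?thesis
    using False by (simp add: conj_commute)
qed

lemma loglik_count_form:
  assumes decomp: "\<And>k Ob. k \<in> {1..K} \<Longrightarrow> ln (obs_prob \<theta> Ob (S k)) = c k
      + (\<Sum>l\<in>desc (S k). (if seen Ob l then f l else 0) + (if lost Ob (S k) l then g l else 0))"
  shows "loglik hed tal E K S n obs \<theta> = (\<Sum>k\<in>{1..K}. real (n k) * c k)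
      + (\<Sum>l\<in>E. N1 hed tal E K S n obs l * f l + N0 hed tal E K S n obs l * g l)"
proof -
  let ?cnt = "\<lambda>k l. cnt1 hed tal E K S n obs k l * f l + cnt0 hed tal E K S n obs k l * g l"
  have per_tree: "(\<Sum>t\<in>{1..n k}. ln (obs_prob \<theta> (obs k t) (S k)))
      = real (n k) * c k + (\<Sum>l\<in>E. ?cnt k l)" if k: "k \<in> {1..K}" for k
  proof -
    have fin: "finite (desc (S k))"
      using finite_descendants[OF root_in_E[OF k]] .
    have "(\<Sum>t\<in>{1..n k}. ln (obs_prob \<theta> (obs k t) (S k)))
        = real (n k) * c k + (\<Sum>l\<in>desc (S k). ?cnt k l)"
      using decomp[OF k] fin
      by (simp add: sum.distrib sum_sum_if_card cnt1_eq[OF k] cnt0_eq[OF k] mult.commute)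
    also have "(\<Sum>l\<in>desc (S k). ?cnt k l) = (\<Sum>l\<in>E. ?cnt k l)"
      using descendants_subset[OF root_in_E[OF k]] finite_E
      by (intro sum.mono_neutral_left) (auto simp: cnt1_outside cnt0_outside)
    finally show ?thesis .
  qed
  have "loglik hed tal E K S n obs \<theta> = (\<Sum>k\<in>{1..K}. real (n k) * c k + (\<Sum>l\<in>E. ?cnt k l))"
    unfolding loglik_eq_sum_ln_obs_prob by (rule sum.cong[OF refl per_tree])
  also have "\<dots> = (\<Sum>k\<in>{1..K}. real (n k) * c k) + (\<Sum>k\<in>{1..K}. \<Sum>l\<in>E. ?cnt k l)"
    by (rule sum.distrib)
  also have "(\<Sum>k\<in>{1..K}. \<Sum>l\<in>E. ?cnt k l)
      = (\<Sum>l\<in>E. N1 hed tal E K S n obs l * f l + N0 hed tal E K S n obs l * g l)"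
    unfolding N1_def N0_def sum_distrib_right sum.distrib[symmetric] by (rule sum.swap)
  finally show ?thesis .
qed

lemma loglik_psi_form:
  assumes \<theta>: "\<theta> \<in> Theta_space E"
  shows "loglik hed tal E K S n obs \<theta> = (\<Sum>k\<in>{1..K}. real (n k) * ln (\<Gamma> \<theta> (S k)))
      + (\<Sum>l\<in>E. N1 hed tal E K S n obs l * \<Lambda> (\<Gamma> \<theta>) l)"
  using loglik_count_form[where g = "\<lambda>_. 0"] ln_obs_prob_psi_form[OF \<theta> root_in_E] by simp

lemma loglik_xi_form:
  assumes \<theta>: "\<theta> \<in> Theta_space E"
  shows "loglik hed tal E K S n obs \<theta> = (\<Sum>l\<in>E. N1 hed tal E K S n obs l
      * ln ((1 - \<Gamma> \<theta> l) / (1 - (if ch l = {} then 0 else \<Prod>j\<in>ch l. \<Gamma> \<theta> j)))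
    + N0 hed tal E K S n obs l * ln (\<Gamma> \<theta> l))"
  using loglik_count_form[where c = "\<lambda>_. 0"] ln_obs_prob_theta_form[OF \<theta> root_in_E]
    one_minus_Gamma_div[OF \<theta>] by simp

end

theorem mainTheorem3:
  fixes hed tal :: "'l \<Rightarrow> 'v" and E :: "'l set" and K :: nat and S :: "nat \<Rightarrow> 'l"
    and n :: "nat \<Rightarrow> nat" and obs :: "nat \<Rightarrow> nat \<Rightarrow> 'l set"
  assumes net: "multicast_network hed tal E K S"
  shows "bij_betw (Lambda hed tal E) (Xi_space hed tal E) (Lambda hed tal E ` Xi_space hed tal E)
    \<and> (\<forall>\<theta> \<in> Theta_space E.
         let \<psi> = Lambda hed tal E (Gamma hed tal E \<theta>);
             \<xi>\<psi> = inv_into (Xi_space hed tal E) (Lambda hed tal E) \<psi>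
         in loglik hed tal E K S n obs \<theta>
            = (\<Sum>k \<in> {1..K}. real (n k) * ln (\<xi>\<psi> (S k)))
              + (\<Sum>i \<in> E. N1 hed tal E K S n obs i * \<psi> i))
    \<and> (\<forall>\<theta> \<in> Theta_space E.
         let \<xi> = Gamma hed tal E \<theta>
         in loglik hed tal E K S n obs \<theta>
            = (\<Sum>i \<in> E. N1 hed tal E K S n obs i
                   * ln ((1 - \<xi> i) / (1 - (if children hed tal E i = {} then 0
                                            else (\<Prod>j \<in> children hed tal E i. \<xi> j))))
                 + N0 hed tal E K S n obs i * ln (\<xi> i)))
    \<and> (\<forall>\<theta> \<in> Theta_space E. \<forall>i \<in> E. \<not> is_leaf hed tal E i \<longrightarrow>
         Lambda hed tal E (Gamma hed tal E \<theta>) i = ln (cond_prob_pass hed tal E \<theta> i))"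
proof -
  interpret multicast_net hed tal E K S
    by (rule multicast_net.intro[OF net])
  have inv: "inv_into (Xi_space hed tal E) \<Lambda> (\<Lambda> (\<Gamma> \<theta>)) = \<Gamma> \<theta>" if "\<theta> \<in> Theta_space E" for \<theta>
    using inj_on_Lambda that by (intro inv_into_f_f) (auto simp: Xi_space_def)
  show ?thesis
    using inj_on_imp_bij_betw[OF inj_on_Lambda] loglik_psi_form loglik_xi_form
      Lambda_Gamma_cond_prob inv
    by (simp add: Let_def)
qed

end
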